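(* Let $G=(V,E)$ be a graph with colouring $f:V\to\{B,R\}$ and let $E'$ be an optimal solution to the MIRE problem on $(G,f)$. Then for every blue node $v$, exactly $\max(r(v)-b(v),0)$ edges of $E\setminus E'$ are incident to $v$, where $r(v),b(v)$ are the numbers of red and blue neighbours of $v$ in $G$.
   Context: Graphs are finite, simple and undirected. A colouring $f:V\to\{B,R\}$ partitions $V$ into the blue nodes $B=f^{-1}(B)$ and red nodes $R=f^{-1}(R)$. For an edge set $E'$ on $V$ and $v\in V$, let $b_{E'}(v)$ and $r_{E'}(v)$ be the numbers of blue and red neighbours of $v$ in $(V,E')$; write $b(v)=b_E(v)$, $r(v)=r_E(v)$. A node $v$ is under (majority) illusion in $(V,E')$ if $r_{E'}(v)>b_{E'}(v)$. Standing assumption: $|B|>|R|$. An optimal solution to MIRE is an edge set $E'\subseteq E$ such that no node is under illusion in $(V,E')$ and $|E\setminus E'|$ is minimum among all such sets. *)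

theory Defs
  imports Main
begin

datatype colour = Blue | Red

definition simple_graph :: "'a set \<Rightarrow> 'a set set \<Rightarrow> bool" where
  "simple_graph V E \<longleftrightarrow> finite V \<and> (\<forall>e\<in>E. e \<subseteq> V \<and> card e = 2)"

definition blue_nbs :: "'a set set \<Rightarrow> ('a \<Rightarrow> colour) \<Rightarrow> 'a \<Rightarrow> nat" where
  "blue_nbs E' f v = card {u. {u, v} \<in> E' \<and> f u = Blue}"

definition red_nbs :: "'a set set \<Rightarrow> ('a \<Rightarrow> colour) \<Rightarrow> 'a \<Rightarrow> nat" where
  "red_nbs E' f v = card {u. {u, v} \<in> E' \<and> f u = Red}"

definition under_illusion :: "'a set set \<Rightarrow> ('a \<Rightarrow> colour) \<Rightarrow> 'a \<Rightarrow> bool" where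
  "under_illusion E' f v \<longleftrightarrow> red_nbs E' f v > blue_nbs E' f v"

definition illusion_free :: "'a set \<Rightarrow> 'a set set \<Rightarrow> ('a \<Rightarrow> colour) \<Rightarrow> bool" where
  "illusion_free V E' f \<longleftrightarrow> (\<forall>v\<in>V. \<not> under_illusion E' f v)"

definition optimal_MIRE :: "'a set \<Rightarrow> 'a set set \<Rightarrow> ('a \<Rightarrow> colour) \<Rightarrow> 'a set set \<Rightarrow> bool" where
  "optimal_MIRE V E f E' \<longleftrightarrow> E' \<subseteq> E \<and> illusion_free V E' f \<and>
     (\<forall>E''. E'' \<subseteq> E \<and> illusion_free V E'' f \<longrightarrow> card (E - E') \<le> card (E - E''))"

end

theory Submission
  imports Defs
begin

text \<open>Restoring a removed edge strictly decreases the number of removed edges, so in an optimal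
  solution every removed edge is needed: putting it back creates an illusion somewhere.
  Putting back an edge with a blue endpoint x can only raise a red count at x, and only when the
  other endpoint is red. Hence an optimal solution never removes a blue--blue edge, so at a blue
  node v it keeps all blue neighbours and removes only red ones; and if it removes one, putting
  it back must create an illusion at v, which forces r_{E'}(v) = b(v). Counting the removed edges
  at v as r(v) - r_{E'}(v) gives the claim.\<close>

lemma finite_nbs:
  assumes "simple_graph V E" "E' \<subseteq> E"
  shows "finite {u. {u, w} \<in> E' \<and> P u}"
proof (rule finite_subset)
  show "{u. {u, w} \<in> E' \<and> P u} \<subseteq> V"
    using assms unfolding simple_graph_def by blast
  show "finite V" using assms(1) unfolding simple_graph_def by simp
qed

lemma simple_graph_edge_other_endpoint:
  assumes "simple_graph V E" "e \<in> E" "v \<in> e"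
  obtains u where "e = {u, v}"
proof -
  have "card e = 2" using assms(1,2) unfolding simple_graph_def by auto
  then obtain a b where "e = {a, b}" by (auto simp: card_2_iff)
  with assms(3) have "e = {b, v} \<or> e = {a, v}" by (auto simp: doubleton_eq_iff)
  then show ?thesis using that by blast
qed

lemma finite_edges: "simple_graph V E \<Longrightarrow> finite E"
  unfolding simple_graph_def by (meson Pow_iff finite_Pow_iff finite_subset subsetI)

lemma card_nbs_mono:
  assumes "simple_graph V E" "E1 \<subseteq> E2" "E2 \<subseteq> E"
  shows "card {u. {u, w} \<in> E1 \<and> P u} \<le> card {u. {u, w} \<in> E2 \<and> P u}"
  using assms by (intro card_mono finite_nbs) auto

lemma card_incident_edges:
  assumes "simple_graph V E" "F \<subseteq> E"
  shows "card {e \<in> F. v \<in> e} = card {u. {u, v} \<in> F}"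
proof -
  have "bij_betw (\<lambda>u. {u, v}) {u. {u, v} \<in> F} {e \<in> F. v \<in> e}"
  proof (rule bij_betwI')
    show "({x, v} = {y, v}) = (x = y)" for x y by (auto simp: doubleton_eq_iff)
    show "\<exists>u\<in>{u. {u, v} \<in> F}. e = {u, v}" if "e \<in> {e \<in> F. v \<in> e}" for e
    proof -
      have "e \<in> E" "v \<in> e" using that assms(2) by auto
      then obtain u where "e = {u, v}" by (rule simple_graph_edge_other_endpoint[OF assms(1)])
      with that show ?thesis by auto
    qed
  qed auto
  then show ?thesis by (metis bij_betw_same_card)
qed

lemma red_nbs_insert_blue_endpoint:
  assumes "simple_graph V E" "E' \<subseteq> E" "f x = Blue"
  shows "red_nbs (insert {x, y} E') f w \<le> red_nbs E' f w + (if w = x \<and> f y = Red then 1 else 0)"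
proof -
  let ?extra = "if w = x \<and> f y = Red then {y} else {}"
  have "{u. {u, w} \<in> insert {x, y} E' \<and> f u = Red} \<subseteq> {u. {u, w} \<in> E' \<and> f u = Red} \<union> ?extra"
    using assms(3) by (auto simp: doubleton_eq_iff)
  then have "red_nbs (insert {x, y} E') f w \<le> card ({u. {u, w} \<in> E' \<and> f u = Red} \<union> ?extra)"
    unfolding red_nbs_def using finite_nbs[OF assms(1,2)] by (intro card_mono) auto
  also have "\<dots> \<le> red_nbs E' f w + card ?extra"
    unfolding red_nbs_def by (rule card_Un_le)
  also have "\<dots> = red_nbs E' f w + (if w = x \<and> f y = Red then 1 else 0)"
    by simp
  finally show ?thesis .
qed

lemma illusion_free_red_le_blue:
  "illusion_free V E' f \<Longrightarrow> v \<in> V \<Longrightarrow> red_nbs E' f v \<le> blue_nbs E' f v"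
  unfolding illusion_free_def under_illusion_def by auto

lemma illusion_free_insert_edge:
  assumes "simple_graph V E" "E' \<subseteq> E" "{x, y} \<in> E"
    and "illusion_free V E' f" "f x = Blue"
    and "f y = Red \<Longrightarrow> red_nbs E' f x < blue_nbs E' f x"
  shows "illusion_free V (insert {x, y} E') f"
  unfolding illusion_free_def under_illusion_def
proof (intro ballI notI)
  fix w assume "w \<in> V" and illusion: "blue_nbs (insert {x, y} E') f w < red_nbs (insert {x, y} E') f w"
  have "blue_nbs E' f w \<le> blue_nbs (insert {x, y} E') f w"
    unfolding blue_nbs_def using assms(1-3) by (intro card_nbs_mono) auto
  moreover have "red_nbs E' f w \<le> blue_nbs E' f w"
    using illusion_free_red_le_blue[OF assms(4) \<open>w \<in> V\<close>] .
  ultimately show False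
    using red_nbs_insert_blue_endpoint[where f = f and x = x and y = y and w = w, OF assms(1,2,5)] illusion assms(6)
    by (auto split: if_splits)
qed

lemma optimal_MIRED:
  assumes "optimal_MIRE V E f E'"
  shows "E' \<subseteq> E" and "illusion_free V E' f"
    and "E'' \<subseteq> E \<Longrightarrow> illusion_free V E'' f \<Longrightarrow> card (E - E') \<le> card (E - E'')"
  using assms unfolding optimal_MIRE_def by simp_all

lemma optimal_MIRE_not_illusion_free_insert:
  assumes "simple_graph V E" "optimal_MIRE V E f E'" "e \<in> E - E'"
  shows "\<not> illusion_free V (insert e E') f"
proof
  assume "illusion_free V (insert e E') f"
  moreover have "insert e E' \<subseteq> E" using optimal_MIRED(1)[OF assms(2)] assms(3) by blast
  ultimately have "card (E - E') \<le> card (E - insert e E')"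
    using optimal_MIRED(3)[OF assms(2)] by simp
  moreover have "card (E - insert e E') < card (E - E')"
  proof -
    have "E - insert e E' = (E - E') - {e}" by blast
    then show ?thesis using assms(3) finite_edges[OF assms(1)] card_Diff1_less[of "E - E'" e] by simp
  qed
  ultimately show False by simp
qed

lemma optimal_MIRE_keeps_blue_edges:
  assumes "simple_graph V E" "optimal_MIRE V E f E'" "{x, y} \<in> E" "f x = Blue" "f y = Blue"
  shows "{x, y} \<in> E'"
proof (rule ccontr)
  assume "{x, y} \<notin> E'"
  moreover have "illusion_free V (insert {x, y} E') f"
    using illusion_free_insert_edge[where x = x and y = y and f = f] assms(1,3-5)
      optimal_MIRED(1,2)[OF assms(2)] by simp
  ultimately show False
    using optimal_MIRE_not_illusion_free_insert[OF assms(1,2)] assms(3) by blast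
qed

lemma optimal_MIRE_blue_nbs_eq:
  assumes "simple_graph V E" "optimal_MIRE V E f E'" "f v = Blue"
  shows "blue_nbs E' f v = blue_nbs E f v"
proof -
  have "{u. {u, v} \<in> E' \<and> f u = Blue} = {u. {u, v} \<in> E \<and> f u = Blue}"
    using optimal_MIRE_keeps_blue_edges[OF assms(1,2)] optimal_MIRED(1)[OF assms(2)] assms(3) by blast
  then show ?thesis unfolding blue_nbs_def by simp
qed

lemma optimal_MIRE_card_removed_at_blue:
  assumes "simple_graph V E" "optimal_MIRE V E f E'" "f v = Blue"
  shows "card {e \<in> E - E'. v \<in> e} = red_nbs E f v - red_nbs E' f v"
proof -
  have "E' \<subseteq> E" using optimal_MIRED(1)[OF assms(2)] .
  have "{u. {u, v} \<in> E - E'} = {u. {u, v} \<in> E \<and> f u = Red} - {u. {u, v} \<in> E' \<and> f u = Red}"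
    using optimal_MIRE_keeps_blue_edges[OF assms(1,2)] assms(3) by (auto intro: colour.exhaust)
  moreover have "{u. {u, v} \<in> E' \<and> f u = Red} \<subseteq> {u. {u, v} \<in> E \<and> f u = Red}"
    using \<open>E' \<subseteq> E\<close> by auto
  ultimately show ?thesis
    unfolding card_incident_edges[OF assms(1) Diff_subset] red_nbs_def
    using finite_nbs[OF assms(1), of E] by (simp add: card_Diff_subset finite_subset)
qed

lemma optimal_MIRE_removal_at_blue_is_tight:
  assumes "simple_graph V E" "optimal_MIRE V E f E'" "f v = Blue" "e \<in> E - E'" "v \<in> e"
  shows "red_nbs E' f v = blue_nbs E' f v"
proof -
  obtain u where e: "e = {v, u}"
    using simple_graph_edge_other_endpoint[OF assms(1) _ assms(5)] assms(4) by (metis DiffD1 insert_commute)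
  have "v \<in> V" using assms(1,4,5) unfolding simple_graph_def by auto
  have le: "red_nbs E' f v \<le> blue_nbs E' f v"
    using illusion_free_red_le_blue[OF optimal_MIRED(2)[OF assms(2)] \<open>v \<in> V\<close>] .
  have "\<not> red_nbs E' f v < blue_nbs E' f v"
  proof
    assume "red_nbs E' f v < blue_nbs E' f v"
    then have "illusion_free V (insert e E') f"
      unfolding e using assms(3,4) e optimal_MIRED(1,2)[OF assms(2)]
      by (intro illusion_free_insert_edge[OF assms(1)]) auto
    then show False
      using optimal_MIRE_not_illusion_free_insert[OF assms(1,2,4)] by simp
  qed
  with le show ?thesis by simp
qed

theorem mainTheorem4:
  fixes V :: "'a set" and E E' :: "'a set set" and f :: "'a \<Rightarrow> colour"
  assumes "simple_graph V E"
    and "card {v\<in>V. f v = Blue} > card {v\<in>V. f v = Red}"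
    and "optimal_MIRE V E f E'"
  shows "\<forall>v\<in>V. f v = Blue \<longrightarrow>
           int (card {e\<in>E - E'. v \<in> e}) = max (int (red_nbs E f v) - int (blue_nbs E f v)) 0"
proof (intro ballI impI)
  fix v assume "v \<in> V" "f v = Blue"
  have removed: "card {e \<in> E - E'. v \<in> e} = red_nbs E f v - red_nbs E' f v"
    using optimal_MIRE_card_removed_at_blue[OF assms(1,3) \<open>f v = Blue\<close>] .
  have blue: "blue_nbs E' f v = blue_nbs E f v"
    using optimal_MIRE_blue_nbs_eq[OF assms(1,3) \<open>f v = Blue\<close>] .
  have "red_nbs E' f v \<le> red_nbs E f v"
    unfolding red_nbs_def using assms(1) optimal_MIRED(1)[OF assms(3)] by (rule card_nbs_mono) simp
  moreover have "red_nbs E' f v \<le> blue_nbs E' f v"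
    using illusion_free_red_le_blue[OF optimal_MIRED(2)[OF assms(3)] \<open>v \<in> V\<close>] .
  moreover have "red_nbs E' f v = blue_nbs E' f v" if removal: "card {e \<in> E - E'. v \<in> e} \<noteq> 0"
  proof -
    have "{e \<in> E - E'. v \<in> e} \<noteq> {}" using removal by (metis card.empty)
    then obtain e where "e \<in> E - E'" "v \<in> e" by blast
    then show ?thesis by (rule optimal_MIRE_removal_at_blue_is_tight[OF assms(1,3) \<open>f v = Blue\<close>])
  qed
  ultimately show "int (card {e \<in> E - E'. v \<in> e}) = max (int (red_nbs E f v) - int (blue_nbs E f v)) 0"
    unfolding removed blue by linarith
qed

end
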